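(* Let $d\in\mathbb{Z}_2$ with $d\equiv 3\pmod 4$ and consider $f(x)=x^2+x-d$ as a map $\mathbb{Z}_2\to\mathbb{Z}_2$. Then $f(2\mathbb{Z}_2)\subset 1+2\mathbb{Z}_2$, and $1+2\mathbb{Z}_2$ is the unique minimal component of $f$.
   Context: A minimal component of $f$ is a clopen set $E\subset\mathbb{Z}_2$ with $f(E)\subset E$ such that $f:E\to E$ is minimal (every orbit in $E$ is dense in $E$). *)

theory Defs
  imports "HOL-Analysis.Analysis"
begin

text \<open>An element of Z_2 is represented by the sequence of its residues
  x_n in {0..2^n-1} modulo 2^n, with x_(n+1) mod 2^n = x_n.\<close>

typedef z2 = "{x :: nat \<Rightarrow> int. \<forall>n. 0 \<le> x n \<and> x n < 2 ^ n \<and> x (Suc n) mod 2 ^ n = x n}"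
  by (rule exI[of _ "\<lambda>_. 0"]) simp

setup_lifting type_definition_z2

lemma z2_rep_range: "0 \<le> Rep_z2 x n" "Rep_z2 x n < 2 ^ n"
  using Rep_z2[of x] by auto

lemma z2_rep_mod [simp]: "Rep_z2 x n mod 2 ^ n = Rep_z2 x n"
  using z2_rep_range[of x n] by simp

lemma z2_rep_0 [simp]: "Rep_z2 x 0 = 0"
  using z2_rep_range[of x 0] by simp

lemma z2_rep_Suc: "Rep_z2 x (Suc n) mod 2 ^ n = Rep_z2 x n"
  using Rep_z2[of x] by auto

lemma z2_eqI: "(\<And>n. Rep_z2 x n = Rep_z2 y n) \<Longrightarrow> x = y"
  by (metis Rep_z2_inject ext)

lemma mod_pow2_Suc: "(a :: int) mod 2 ^ Suc n mod 2 ^ n = a mod 2 ^ n"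
  by (simp add: mod_mod_cancel)

lemma z2_norm:
  fixes g :: "nat \<Rightarrow> int"
  assumes "\<And>m. g (Suc m) mod 2 ^ m = g m mod 2 ^ m"
  shows "0 \<le> g n mod 2 ^ n \<and> g n mod 2 ^ n < 2 ^ n
            \<and> g (Suc n) mod 2 ^ Suc n mod 2 ^ n = g n mod 2 ^ n"
  using assms[of n] mod_pow2_Suc[of "g (Suc n)" n] by simp

instantiation z2 :: comm_ring_1
begin

lift_definition zero_z2 :: z2 is "\<lambda>n. 0" by simp

lift_definition one_z2 :: z2 is "\<lambda>n. 1 mod 2 ^ n"
  by (rule z2_norm) simp

lift_definition plus_z2 :: "z2 \<Rightarrow> z2 \<Rightarrow> z2" is "\<lambda>x y n. (x n + y n) mod 2 ^ n"
  by (rule z2_norm) (metis mod_add_eq)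

lift_definition times_z2 :: "z2 \<Rightarrow> z2 \<Rightarrow> z2" is "\<lambda>x y n. (x n * y n) mod 2 ^ n"
  by (rule z2_norm) (metis mod_mult_eq)

lift_definition minus_z2 :: "z2 \<Rightarrow> z2 \<Rightarrow> z2" is "\<lambda>x y n. (x n - y n) mod 2 ^ n"
  by (rule z2_norm) (metis mod_diff_eq)

lift_definition uminus_z2 :: "z2 \<Rightarrow> z2" is "\<lambda>x n. (- x n) mod 2 ^ n"
  by (rule z2_norm) (metis mod_minus_eq)

instance
proof
  fix a b c :: z2
  show "a + b + c = a + (b + c)"
    by (rule z2_eqI) (simp only: plus_z2.rep_eq mod_add_left_eq mod_add_right_eq add.assoc)
  show "a + b = b + a"
    by (rule z2_eqI) (simp only: plus_z2.rep_eq add.commute)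
  show "0 + a = a"
    by (rule z2_eqI) (simp only: plus_z2.rep_eq zero_z2.rep_eq add_0_left z2_rep_mod)
  show "- a + a = 0"
    by (rule z2_eqI) (simp only: plus_z2.rep_eq zero_z2.rep_eq uminus_z2.rep_eq
        mod_add_left_eq add.left_inverse mod_0)
  show "a - b = a + - b"
    by (rule z2_eqI) (simp only: plus_z2.rep_eq minus_z2.rep_eq uminus_z2.rep_eq
        mod_add_right_eq diff_conv_add_uminus)
  show "a * b * c = a * (b * c)"
    by (rule z2_eqI) (simp only: times_z2.rep_eq mod_mult_left_eq mod_mult_right_eq mult.assoc)
  show "a * b = b * a"
    by (rule z2_eqI) (simp only: times_z2.rep_eq mult.commute)
  show "1 * a = a"
    by (rule z2_eqI) (simp only: times_z2.rep_eq one_z2.rep_eq mod_mult_left_eq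
        mult_1_left z2_rep_mod)
  show "(a + b) * c = a * c + b * c"
    by (rule z2_eqI) (simp only: times_z2.rep_eq plus_z2.rep_eq mod_mult_left_eq
        mod_add_left_eq mod_add_right_eq distrib_right)
  show "(0::z2) \<noteq> 1"
  proof
    assume "(0::z2) = 1"
    then have "Rep_z2 0 1 = Rep_z2 1 1" by simp
    then show False by (simp add: zero_z2.rep_eq one_z2.rep_eq)
  qed
qed

end

lemma z2_rep_le: "n \<le> m \<Longrightarrow> Rep_z2 x m mod 2 ^ n = Rep_z2 x n"
proof (induction m rule: dec_induct)
  case base then show ?case by simp
next
  case (step m)
  have "Rep_z2 x (Suc m) mod 2 ^ n = Rep_z2 x (Suc m) mod 2 ^ m mod 2 ^ n"
    using step(1) by (simp add: mod_mod_cancel le_imp_power_dvd)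
  then show ?case using step z2_rep_Suc by simp
qed

instantiation z2 :: topological_space
begin

definition open_z2 :: "z2 set \<Rightarrow> bool" where
  "open_z2 U \<longleftrightarrow> (\<forall>x\<in>U. \<exists>n. \<forall>y. Rep_z2 y n = Rep_z2 x n \<longrightarrow> y \<in> U)"

instance
proof
  show "open (UNIV :: z2 set)" by (simp add: open_z2_def)
next
  fix S T :: "z2 set"
  assume S: "open S" and T: "open T"
  show "open (S \<inter> T)"
    unfolding open_z2_def
  proof
    fix x assume "x \<in> S \<inter> T"
    then have xS: "x \<in> S" and xT: "x \<in> T" by auto
    obtain n where n: "\<forall>y. Rep_z2 y n = Rep_z2 x n \<longrightarrow> y \<in> S"
      using S xS unfolding open_z2_def by blast
    obtain m where m: "\<forall>y. Rep_z2 y m = Rep_z2 x m \<longrightarrow> y \<in> T"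
      using T xT unfolding open_z2_def by blast
    show "\<exists>k. \<forall>y. Rep_z2 y k = Rep_z2 x k \<longrightarrow> y \<in> S \<inter> T"
    proof (intro exI allI impI)
      fix y assume "Rep_z2 y (max n m) = Rep_z2 x (max n m)"
      then have "Rep_z2 y n = Rep_z2 x n" "Rep_z2 y m = Rep_z2 x m"
        by (metis max.cobounded1 max.cobounded2 z2_rep_le)+
      then show "y \<in> S \<inter> T" using n m by simp
    qed
  qed
next
  fix K :: "z2 set set"
  assume K: "\<forall>S\<in>K. open S"
  show "open (\<Union>K)" unfolding open_z2_def
  proof
    fix x assume "x \<in> \<Union>K"
    then obtain S where S: "S \<in> K" "x \<in> S" by blast
    then obtain n where n: "\<forall>y. Rep_z2 y n = Rep_z2 x n \<longrightarrow> y \<in> S"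
      using K unfolding open_z2_def by blast
    show "\<exists>n. \<forall>y. Rep_z2 y n = Rep_z2 x n \<longrightarrow> y \<in> \<Union>K"
      using n S(1) by blast
  qed
qed

end

definition orbit :: "('a \<Rightarrow> 'a) \<Rightarrow> 'a \<Rightarrow> 'a set" where
  "orbit f x = {(f ^^ n) x | n. True}"

definition minimal_component :: "(z2 \<Rightarrow> z2) \<Rightarrow> z2 set \<Rightarrow> bool" where
  "minimal_component f E \<longleftrightarrow>
     E \<noteq> {} \<and> open E \<and> closed E \<and> f ` E \<subseteq> E \<and>
     (\<forall>x\<in>E. E \<subseteq> closure (orbit f x))"

end

theory Submission
  imports Defs "HOL-Number_Theory.Cong"
begin

text \<open>Write F(t) = t^2 + t - D for an integer D \<equiv> 3 (mod 4). F maps odd integers to odd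
  integers, and by induction on n every odd residue modulo 2^(n+1) has exact F-period 2^n, so
  F permutes the 2^n odd residues cyclically. For the induction step one computes
  F^(2^n)(x) - x as the sum of F(y) - y = y^2 - D over one period; modulo 2^(n+2) the squares
  only depend on the residues mod 2^(n+1), which run through all odd residues, and summing
  (2j+1)^2 - D over j < 2^n gives 2^(n+1) modulo 2^(n+2). Hence the period doubles when passing
  to modulus 2^(n+2). On Z_2 this says that every orbit in 1 + 2Z_2 meets every ball of
  1 + 2Z_2, while f maps all of Z_2 into 1 + 2Z_2, which forces uniqueness.\<close>

section \<open>The quadratic map on odd residues\<close>

definition quad :: "int \<Rightarrow> int \<Rightarrow> int" where
  "quad D t = t^2 + t - D"

lemma quad_cong: "[a = b] (mod m) \<Longrightarrow> [quad D a = quad D b] (mod m)"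
  unfolding quad_def by (intro cong_diff cong_add cong_pow) auto

lemma odd_quad: "odd D \<Longrightarrow> odd (quad D t)"
  unfolding quad_def by (auto simp: power2_eq_square)

lemma odd_quad_iter: "odd D \<Longrightarrow> odd a \<Longrightarrow> odd ((quad D ^^ k) a)"
  by (induction k) (auto simp: odd_quad)

lemma odd_if_mod4_eq_3: "(D::int) mod 4 = 3 \<Longrightarrow> odd D"
  by presburger

lemma odd_mod_even: "even (m::int) \<Longrightarrow> odd a \<Longrightarrow> odd (a mod m)"
  by (metis dvd_mod_iff even_iff_mod_2_eq_zero mod_mod_cancel odd_iff_mod_2_eq_one)

lemma odd_square_cong:
  fixes t t' :: int
  assumes "odd t" "odd t'" "[t = t'] (mod 2^(n+1))"
  shows "[t^2 = t'^2] (mod 2^(n+2))"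
proof -
  obtain s where s: "t - t' = 2^(n+1) * s" using assms(3)
    by (metis cong_iff_dvd_diff cong_sym dvd_def)
  obtain e where e: "t + t' = 2 * e" using assms(1,2) by (metis odd_add evenE)
  have "t^2 - t'^2 = (t - t') * (t + t')" by (simp add: power2_eq_square algebra_simps)
  also have "\<dots> = 2^(n+2) * (s * e)" using s e by simp
  finally show ?thesis by (metis cong_iff_dvd_diff dvd_triv_left cong_sym)
qed

definition odd_residues :: "nat \<Rightarrow> int set" where
  "odd_residues n = {r. 0 \<le> r \<and> r < 2^(n+1) \<and> odd r}"

lemma odd_residues_eq_image: "odd_residues n = (\<lambda>j. 2 * int j + 1) ` {..<2^n}"
proof (intro set_eqI iffI)
  fix r assume "r \<in> odd_residues n"
  then have r: "0 \<le> r" "r < 2^(n+1)" "odd r" by (auto simp: odd_residues_def)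
  then obtain j where j: "r = 2 * j + 1" by (metis oddE)
  have "nat j < 2^n"
    using r j by (simp add: nat_less_iff)
  moreover have "r = 2 * int (nat j) + 1" using r j by simp
  ultimately show "r \<in> (\<lambda>j. 2 * int j + 1) ` {..<2^n}" by blast
next
  fix r assume "r \<in> (\<lambda>j. 2 * int j + 1) ` {..<2^n}"
  then obtain j where j: "r = 2 * int j + 1" "j < 2^n" by auto
  have "int j < 2^n" using j(2) by (metis of_nat_less_iff of_nat_numeral of_nat_power)
  then have "2 * int j + 1 < 2^(n+1)" by (simp only: power_add power_one_right)
  then show "r \<in> odd_residues n" using j(1) by (simp add: odd_residues_def)
qed

lemma card_odd_residues: "card (odd_residues n) = 2^n"
  unfolding odd_residues_eq_image by (subst card_image) (auto simp: inj_on_def)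

definition quad_exact_period :: "int \<Rightarrow> nat \<Rightarrow> bool" where
  "quad_exact_period D n \<longleftrightarrow>
     (\<forall>y k. odd y \<longrightarrow> ([(quad D ^^ k) y = y] (mod 2^(n+1)) \<longleftrightarrow> 2^n dvd k))"

lemma inj_on_quad_orbit_residues:
  assumes P: "quad_exact_period D n" and D: "odd D" and a: "odd a"
  shows "inj_on (\<lambda>i. (quad D ^^ i) a mod 2^(n+1)) {..<2^n}"
proof -
  have False if ij: "i < j" "j < 2^n"
    and eq: "(quad D ^^ i) a mod 2^(n+1) = (quad D ^^ j) a mod 2^(n+1)" for i j
  proof -
    let ?y = "(quad D ^^ i) a"
    have "(quad D ^^ j) a = (quad D ^^ (j - i)) ?y"
      using ij by (metis funpow_add le_add_diff_inverse2 less_imp_le o_apply)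
    then have "[(quad D ^^ (j - i)) ?y = ?y] (mod 2^(n+1))" using eq by (simp add: cong_def)
    moreover have "odd ?y" using odd_quad_iter D a by blast
    ultimately have "2^n dvd (j - i)" using P unfolding quad_exact_period_def by blast
    then show False using ij nat_dvd_not_less by auto
  qed
  then show ?thesis unfolding inj_on_def by (metis lessThan_iff linorder_neqE_nat)
qed

lemma quad_orbit_residues_eq:
  assumes P: "quad_exact_period D n" and D: "odd D" and a: "odd a"
  shows "(\<lambda>i. (quad D ^^ i) a mod 2^(n+1)) ` {..<2^n} = odd_residues n"
proof (rule card_subset_eq)
  show "finite (odd_residues n)" by (simp add: odd_residues_eq_image)
  show "(\<lambda>i. (quad D ^^ i) a mod 2^(n+1)) ` {..<2^n} \<subseteq> odd_residues n"
    using odd_mod_even[OF _ odd_quad_iter[OF D a]] by (auto simp: odd_residues_def)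
  show "card ((\<lambda>i. (quad D ^^ i) a mod 2^(n+1)) ` {..<2^n}) = card (odd_residues n)"
    using card_image[OF inj_on_quad_orbit_residues[OF assms]] by (simp add: card_odd_residues)
qed

lemma quad_iter_minus_eq_sum: "(quad D ^^ N) x - x = (\<Sum>i<N. ((quad D ^^ i) x)^2 - D)"
  using sum_lessThan_telescope[of "\<lambda>i. (quad D ^^ i) x" N] by (simp add: quad_def)

lemma sum_quad_orbit_squares_cong:
  assumes P: "quad_exact_period D n" and D: "odd D" and x: "odd x"
  shows "[(\<Sum>i<2^n. ((quad D ^^ i) x)^2) = (\<Sum>j<2^n. (2 * int j + 1)^2)] (mod 2^(n+2))"
proof -
  let ?r = "\<lambda>i. (quad D ^^ i) x mod 2^(n+1)"
  have "[(\<Sum>i<2^n. ((quad D ^^ i) x)^2) = (\<Sum>i<2^n. (?r i)^2)] (mod 2^(n+2))"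
  proof (rule cong_sum)
    fix i
    have "odd ((quad D ^^ i) x)" using odd_quad_iter D x by blast
    moreover from this have "odd (?r i)" by (intro odd_mod_even) auto
    moreover have "[(quad D ^^ i) x = ?r i] (mod 2^(n+1))" by (simp add: cong_def)
    ultimately show "[((quad D ^^ i) x)^2 = (?r i)^2] (mod 2^(n+2))" by (rule odd_square_cong)
  qed
  also have "(\<Sum>i<2^n. (?r i)^2) = (\<Sum>r\<in>odd_residues n. r^2)"
    unfolding quad_orbit_residues_eq[OF assms, symmetric]
    by (subst sum.reindex[OF inj_on_quad_orbit_residues[OF assms]]) simp
  also have "\<dots> = (\<Sum>j<2^n. (2 * int j + 1)^2)"
    unfolding odd_residues_eq_image by (subst sum.reindex) (auto simp: inj_on_def)
  finally show ?thesis .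
qed

lemma sum_odd_squares: "3 * (\<Sum>j<N. (2 * int j + 1)^2) = int N * (4 * int N^2 - 1)"
  by (induction N) (auto simp: power2_eq_square algebra_simps)

lemma sum_odd_squares_minus_cong:
  assumes D: "D mod 4 = 3"
  shows "[(\<Sum>j<2^n. (2 * int j + 1)^2) - 2^n * D = 2^(n+1)] (mod 2^(n+2))"
proof -
  obtain e where e: "D = 3 + 4 * e" using D by (metis mod_div_mult_eq add.commute mult.commute)
  define N :: int where "N = 2^n"
  define S where "S = (\<Sum>j<(2::nat)^n. (2 * int j + 1)^2)"
  have "3 * (S - N * D - 2 * N) = 2^(n+2) * (N^2 - 4 - 3 * e)"
    using sum_odd_squares[of "2^n"] unfolding S_def N_def e
    by (simp add: algebra_simps power2_eq_square)
  then have "2^(n+2) dvd 3 * (S - N * D - 2 * N)" by (metis dvd_triv_left)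
  moreover have "coprime ((2::int)^(n+2)) 3"
    by (rule coprime_power_left_iff[THEN iffD2]) (simp add: coprime_left_2_iff_odd)
  ultimately have "2^(n+2) dvd S - N * D - 2 * N"
    using coprime_dvd_mult_right_iff by blast
  then show ?thesis
    unfolding S_def N_def by (simp add: cong_iff_dvd_diff)
qed

lemma quad_iter_period_shift:
  assumes P: "quad_exact_period D n" and D: "D mod 4 = 3" and x: "odd x"
  shows "[(quad D ^^ 2^n) x = x + 2^(n+1)] (mod 2^(n+2))"
proof -
  have "(quad D ^^ 2^n) x - x = (\<Sum>i<2^n. ((quad D ^^ i) x)^2) - 2^n * D"
    by (simp add: quad_iter_minus_eq_sum sum_subtractf)
  also have "[(\<Sum>i<2^n. ((quad D ^^ i) x)^2) - 2^n * D
      = (\<Sum>j<2^n. (2 * int j + 1)^2) - 2^n * D] (mod 2^(n+2))"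
    using sum_quad_orbit_squares_cong[OF P odd_if_mod4_eq_3[OF D] x] by (rule cong_diff) simp
  also have "[(\<Sum>j<2^n. (2 * int j + 1)^2) - 2^n * D = 2^(n+1)] (mod 2^(n+2))"
    using D by (rule sum_odd_squares_minus_cong)
  finally show ?thesis by (simp add: cong_iff_dvd_diff algebra_simps)
qed

lemma quad_iter_period_mult:
  assumes P: "quad_exact_period D n" and D: "D mod 4 = 3" and y: "odd y"
  shows "[(quad D ^^ (2^n * m)) y = y + int m * 2^(n+1)] (mod 2^(n+2))"
  using y
proof (induction m arbitrary: y)
  case 0 then show ?case by simp
next
  case (Suc m)
  let ?y = "(quad D ^^ 2^n) y"
  have split: "(quad D ^^ (2^n * Suc m)) y = (quad D ^^ (2^n * m)) ?y"
    by (simp only: mult_Suc_right add.commute[of "2^n"] funpow_add o_apply)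
  have "odd ?y" using odd_quad_iter odd_if_mod4_eq_3[OF D] Suc.prems by blast
  then have "[(quad D ^^ (2^n * m)) ?y = ?y + int m * 2^(n+1)] (mod 2^(n+2))" by (rule Suc.IH)
  also have "[?y + int m * 2^(n+1) = (y + 2^(n+1)) + int m * 2^(n+1)] (mod 2^(n+2))"
    using quad_iter_period_shift[OF P D Suc.prems] by (rule cong_add) (rule cong_refl)
  also have "(y + 2^(n+1)) + int m * 2^(n+1) = y + int (Suc m) * 2^(n+1)"
    by (simp add: algebra_simps)
  finally show ?case unfolding split .
qed

lemma quad_exact_period_Suc:
  assumes P: "quad_exact_period D n" and D: "D mod 4 = 3"
  shows "quad_exact_period D (Suc n)"
  unfolding quad_exact_period_def
proof (intro allI impI)
  fix y k assume y: "odd (y::int)"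
  have step: "[(quad D ^^ (2^n * m)) y = y] (mod 2^(n+2)) \<longleftrightarrow> even m" for m
  proof -
    have "[y + int m * 2^(n+1) = y] (mod 2^(n+2)) \<longleftrightarrow> 2^(n+1) * 2 dvd 2^(n+1) * int m"
      by (simp add: cong_iff_dvd_diff mult.commute)
    also have "\<dots> \<longleftrightarrow> even m" by (subst dvd_mult_cancel_left) simp
    finally show ?thesis
      using quad_iter_period_mult[OF P D y] by (meson cong_sym cong_trans)
  qed
  show "[(quad D ^^ k) y = y] (mod 2^(Suc n + 1)) \<longleftrightarrow> 2^Suc n dvd k"
  proof
    assume h: "[(quad D ^^ k) y = y] (mod 2^(Suc n + 1))"
    then have "[(quad D ^^ k) y = y] (mod 2^(n+1))"
      by (rule cong_dvd_modulus) (simp add: le_imp_power_dvd)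
    then obtain m where k: "k = 2^n * m" using P y unfolding quad_exact_period_def by blast
    then have "even m" using h step by simp
    then show "2^Suc n dvd k" using k by auto
  next
    assume "2^Suc n dvd k"
    then obtain m where "k = 2^n * (2 * m)" by auto
    then show "[(quad D ^^ k) y = y] (mod 2^(Suc n + 1))" using step by simp
  qed
qed

lemma quad_exact_period_all:
  assumes D: "D mod 4 = 3"
  shows "quad_exact_period D n"
proof (induction n)
  case 0
  have "odd ((quad D ^^ k) y)" if "odd y" for y k
    using odd_quad_iter odd_if_mod4_eq_3[OF D] that by blast
  then show ?case
    unfolding quad_exact_period_def by (simp add: cong_def odd_iff_mod_2_eq_one)
next
  case (Suc n)
  then show ?case using D by (rule quad_exact_period_Suc)
qed

section \<open>Transfer to Z_2\<close>

lemma Rep_z2_numeral: "Rep_z2 (numeral k) n = numeral k mod 2^n"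
proof (induction k)
  case One then show ?case by (simp add: one_z2.rep_eq)
next
  case (Bit0 k) then show ?case
    by (simp only: numeral_Bit0 plus_z2.rep_eq Bit0.IH mod_add_eq)
next
  case (Bit1 k) then show ?case
    by (simp only: numeral_Bit1 plus_z2.rep_eq one_z2.rep_eq Bit1.IH mod_add_eq)
      (metis mod_add_eq mod_add_left_eq)
qed

lemma Rep_z2_quad:
  assumes "[D = Rep_z2 d n] (mod 2^n)"
  shows "Rep_z2 (x^2 + x - d) n = quad D (Rep_z2 x n) mod 2^n"
proof -
  let ?m = "(2::int)^n" and ?a = "Rep_z2 x n"
  have "Rep_z2 (x^2 + x - d) n = ((?a * ?a mod ?m + ?a) mod ?m - Rep_z2 d n) mod ?m"
    by (simp add: power2_eq_square plus_z2.rep_eq times_z2.rep_eq minus_z2.rep_eq)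
  also have "\<dots> = ((?a * ?a + ?a) - D mod ?m) mod ?m"
    using assms by (simp add: mod_add_left_eq mod_diff_left_eq cong_def)
  also have "\<dots> = quad D ?a mod ?m"
    by (simp add: mod_diff_right_eq quad_def power2_eq_square)
  finally show ?thesis .
qed

lemma Rep_z2_quad_iter:
  assumes "[D = Rep_z2 d n] (mod 2^n)"
  shows "Rep_z2 (((\<lambda>x::z2. x^2 + x - d) ^^ k) x) n = (quad D ^^ k) (Rep_z2 x n) mod 2^n"
proof (induction k)
  case 0 then show ?case by simp
next
  case (Suc k)
  then show ?case
    using Rep_z2_quad[OF assms] quad_cong[of "(quad D ^^ k) (Rep_z2 x n) mod 2^n" _ "2^n" D]
    by (simp add: cong_def)
qed

lemma div2_mod_pow2: "((a::int) div 2) mod 2^n = (a mod 2^(Suc n)) div 2"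
proof -
  have "a mod (2 * 2^n) = 2 * (a div 2 mod 2^n) + a mod 2"
    by (rule zmod_zmult2_eq) simp
  then show ?thesis by simp
qed

lemma odd_Rep_z2: "Rep_z2 x 1 = 1 \<Longrightarrow> odd (Rep_z2 x (Suc n))"
  using z2_rep_le[of 1 "Suc n" x] by (simp add: odd_iff_mod_2_eq_one)

lemma odd_z2_eq: "{1 + 2 * y | y::z2. True} = {z. Rep_z2 z 1 = 1}"
proof (intro set_eqI iffI)
  fix z assume "z \<in> {1 + 2 * y | y::z2. True}"
  then show "z \<in> {z. Rep_z2 z 1 = 1}"
    by (auto simp: plus_z2.rep_eq times_z2.rep_eq one_z2.rep_eq Rep_z2_numeral)
next
  fix z assume "z \<in> {z. Rep_z2 z 1 = 1}"
  then have z1: "Rep_z2 z 1 = 1" by simp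
  define g where "g n = Rep_z2 z (Suc n) div 2" for n
  have g: "g \<in> {x :: nat \<Rightarrow> int. \<forall>n. 0 \<le> x n \<and> x n < 2 ^ n \<and> x (Suc n) mod 2 ^ n = x n}"
  proof safe
    fix n
    show "0 \<le> g n" unfolding g_def using z2_rep_range by simp
    show "g n < 2^n" unfolding g_def using z2_rep_range(2)[of z "Suc n"] by simp
    show "g (Suc n) mod 2^n = g n" unfolding g_def div2_mod_pow2 z2_rep_Suc ..
  qed
  have "z = 1 + 2 * Abs_z2 g"
  proof (rule z2_eqI)
    fix n
    have "Rep_z2 (1 + 2 * Abs_z2 g) n = (1 + 2 * g n) mod 2^n"
      by (simp only: plus_z2.rep_eq times_z2.rep_eq one_z2.rep_eq Rep_z2_numeral
          Abs_z2_inverse[OF g] mod_add_eq mod_mult_left_eq)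
    also have "1 + 2 * g n = Rep_z2 z (Suc n)"
      unfolding g_def using odd_Rep_z2[OF z1, of n] by (metis add.commute odd_two_times_div_two_succ)
    finally show "Rep_z2 z n = Rep_z2 (1 + 2 * Abs_z2 g) n" by (simp add: z2_rep_Suc)
  qed
  then show "z \<in> {1 + 2 * y | y::z2. True}" by blast
qed

lemma open_Rep_z2_eq: "open {z. Rep_z2 z n = r}"
  unfolding open_z2_def by (intro ballI exI[of _ n]) auto

lemma closed_Rep_z2_eq: "closed {z. Rep_z2 z n = r}"
  unfolding closed_def open_z2_def by (intro ballI exI[of _ n]) auto

lemma Rep_z2_three_mod_four:
  assumes "d = 3 + 4 * y"
  shows "Rep_z2 d (m+2) mod 4 = 3"
proof -
  have "Rep_z2 d 2 = 3"
    by (simp add: assms plus_z2.rep_eq times_z2.rep_eq Rep_z2_numeral)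
  then show ?thesis using z2_rep_le[of 2 "m+2" d] by simp
qed

text \<open>The residue of d modulo 2^(m+2) serves as an integer representative of d modulo 2^m
  that still is 3 modulo 4.\<close>

lemma Rep_z2_quad_iter_shifted:
  "Rep_z2 (((\<lambda>x::z2. x^2 + x - d) ^^ k) x) m
     = (quad (Rep_z2 d (m+2)) ^^ k) (Rep_z2 x m) mod 2^m"
  by (rule Rep_z2_quad_iter) (simp add: cong_def z2_rep_le)

lemma quad_z2_odd:
  assumes "d = 3 + 4 * y"
  shows "Rep_z2 (x^2 + x - d) 1 = 1"
proof -
  have "odd (quad (Rep_z2 d 3) (Rep_z2 x 1))"
    using odd_quad odd_if_mod4_eq_3 Rep_z2_three_mod_four[OF assms, of 1]
    by (simp add: numeral_3_eq_3)
  then show ?thesis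
    using Rep_z2_quad_iter_shifted[where k=1 and m=1]
    by (simp add: numeral_3_eq_3 odd_iff_mod_2_eq_one)
qed

lemma quad_z2_orbit_hits:
  assumes d: "d = 3 + 4 * y" and x: "Rep_z2 x 1 = 1" and z: "Rep_z2 z 1 = 1"
  shows "\<exists>k. Rep_z2 (((\<lambda>x::z2. x^2 + x - d) ^^ k) x) n = Rep_z2 z n"
proof -
  let ?D = "Rep_z2 d (Suc n + 2)"
  have D: "?D mod 4 = 3" by (rule Rep_z2_three_mod_four[OF d])
  have "Rep_z2 z (Suc n) \<in> (\<lambda>k. (quad ?D ^^ k) (Rep_z2 x (Suc n)) mod 2^(n+1)) ` {..<2^n}"
    unfolding quad_orbit_residues_eq[OF quad_exact_period_all[OF D]
        odd_if_mod4_eq_3[OF D] odd_Rep_z2[OF x]]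
    using odd_Rep_z2[OF z] z2_rep_range[of z "Suc n"] by (simp add: odd_residues_def)
  then obtain k where k: "(quad ?D ^^ k) (Rep_z2 x (Suc n)) mod 2^(n+1) = Rep_z2 z (Suc n)"
    by (auto elim!: imageE)
  then have "Rep_z2 (((\<lambda>x::z2. x^2 + x - d) ^^ k) x) (Suc n) = Rep_z2 z (Suc n)"
    using Rep_z2_quad_iter_shifted[where k=k and m="Suc n"] by simp
  then show ?thesis by (metis z2_rep_Suc)
qed

section \<open>Minimal components\<close>

lemma closure_orbitI:
  assumes "\<And>n. \<exists>k. Rep_z2 ((f ^^ k) x) n = Rep_z2 z n"
  shows "z \<in> closure (orbit f x)"
  unfolding closure_iff_nhds_not_empty
proof (intro allI impI)
  fix A S assume SA: "S \<subseteq> A" and S: "open S" and zS: "z \<in> S"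
  obtain n where n: "\<forall>y. Rep_z2 y n = Rep_z2 z n \<longrightarrow> y \<in> S"
    using S zS unfolding open_z2_def by blast
  obtain k where "Rep_z2 ((f ^^ k) x) n = Rep_z2 z n" using assms by blast
  then have "(f ^^ k) x \<in> S \<inter> orbit f x" using n unfolding orbit_def by blast
  then show "orbit f x \<inter> A \<noteq> {}" using SA by blast
qed

lemma orbit_subset: "x \<in> E \<Longrightarrow> f ` E \<subseteq> E \<Longrightarrow> orbit f x \<subseteq> E"
proof -
  assume "x \<in> E" "f ` E \<subseteq> E"
  then have "(f ^^ n) x \<in> E" for n by (induction n) auto
  then show ?thesis unfolding orbit_def by blast
qed

text \<open>For x \<in> E both E and E' equal the closure of the orbit of f x: each contains it
  as a closed invariant set, and each lies in it by density.\<close>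

lemma minimal_component_unique:
  assumes E': "closed E'" "range f \<subseteq> E'" "\<And>x. x \<in> E' \<Longrightarrow> E' \<subseteq> closure (orbit f x)"
    and E: "minimal_component f E"
  shows "E = E'"
proof -
  have Ene: "E \<noteq> {}" and Ecl: "closed E" and fE: "f ` E \<subseteq> E"
    and Eden: "\<forall>x\<in>E. E \<subseteq> closure (orbit f x)"
    using E unfolding minimal_component_def by auto
  obtain x where "x \<in> E" using Ene by blast
  then have fxE: "f x \<in> E" and fxE': "f x \<in> E'" using fE E'(2) by auto
  have "closure (orbit f (f x)) \<subseteq> E"
    using orbit_subset[OF fxE fE] Ecl by (rule closure_minimal)
  moreover have "closure (orbit f (f x)) \<subseteq> E'"
    using orbit_subset[OF fxE'] E'(1,2) by (simp add: closure_minimal image_subset_iff)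
  ultimately show ?thesis using E'(3)[OF fxE'] Eden fxE by blast
qed

theorem theoremF:
  fixes d :: z2
  assumes "\<exists>y. d = 3 + 4 * y"
  defines "f \<equiv> (\<lambda>x::z2. x ^ 2 + x - d)"
  shows "f ` {2 * y | y. True} \<subseteq> {1 + 2 * y | y. True}
         \<and> minimal_component f {1 + 2 * y | y. True}
         \<and> (\<forall>E. minimal_component f E \<longrightarrow> E = {1 + 2 * y | y. True})"
proof -
  obtain y where d: "d = 3 + 4 * y" using assms(1) by blast
  let ?O = "{z. Rep_z2 z 1 = 1}"
  have range: "range f \<subseteq> ?O"
    using quad_z2_odd[OF d] by (auto simp: f_def)
  have dense: "?O \<subseteq> closure (orbit f x)" if "x \<in> ?O" for x
    using quad_z2_orbit_hits[OF d] that by (auto simp: f_def intro!: closure_orbitI)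
  have "1 \<in> ?O" by (simp add: one_z2.rep_eq)
  then have "minimal_component f ?O"
    using range dense open_Rep_z2_eq closed_Rep_z2_eq
    unfolding minimal_component_def by blast
  then show ?thesis
    using range dense closed_Rep_z2_eq minimal_component_unique
    unfolding odd_z2_eq by blast
qed

end
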